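(* Let $K$ be a field, let $r, p$ be nonnegative integers and $s, n, q, m$ positive integers. Suppose there exist an $[p, q, m]$-formula and a $[1, q, m]$-formula over $K$ which are amicable. Then, if an $[r+1, s, n]$-formula exists over $K$, an $[r+p,\; sq,\; nm]$-formula exists over $K$.
   Context: For nonnegative integers $r$ and positive integers $s, n$, a sum-of-squares formula of size $[r,s,n]$ (an $[r,s,n]$-formula) over a field $K$ is an identity $(x_1^2+\cdots+x_r^2)(y_1^2+\cdots+y_s^2) = z_1^2+\cdots+z_n^2$ in the polynomial ring over $K$ in independent indeterminates $x_1,\dots,x_r,y_1,\dots,y_s$, where each $z_k$ is a bilinear form in $X=(x_1,\dots,x_r)$ and $Y=(y_1,\dots,y_s)$ with coefficients in $K$. Writing $Z = (x_1A_1+\cdots+x_rA_r)Y$ with $n\times s$ matrices $A_i$ over $K$, such a formula is the same as a system of $n\times s$ matrices $A_1,\dots,A_r$ over $K$ satisfying the Hurwitz equations: $A_i^{\mathsf T}A_i = 1_s$ for all $i$, and $A_i^{\mathsf T}A_j + A_j^{\mathsf T}A_i = 0$ for all $i\neq j$. A $[p,s,n]$-formula given by $n\times s$ matrices $A_1,\dots,A_p$ and a $[q,s,n]$-formula given by $n\times s$ matrices $B_1,\dots,B_q$ (both systems satisfying the Hurwitz equations) are called amicable if $A_i^{\mathsf T}B_k = B_k^{\mathsf T}A_i$ for every $1\le i\le p$ and $1\le k\le q$. *)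

theory Defs
  imports Main
begin

text \<open>An n x s matrix over K is represented as a function k j giving the entry in
row k < n, column j < s. A system of r such matrices is a function i k j (i < r).\<close>

definition hurwitz_system ::
  "nat \<Rightarrow> nat \<Rightarrow> nat \<Rightarrow> (nat \<Rightarrow> nat \<Rightarrow> nat \<Rightarrow> 'a::field) \<Rightarrow> bool" where
  "hurwitz_system r s n A \<longleftrightarrow>
     (\<forall>i<r. \<forall>j<s. \<forall>l<s. (\<Sum>k<n. A i k j * A i k l) = (if j = l then 1 else 0)) \<and>
     (\<forall>i<r. \<forall>i'<r. i \<noteq> i' \<longrightarrow> (\<forall>j<s. \<forall>l<s.
        (\<Sum>k<n. A i k j * A i' k l) + (\<Sum>k<n. A i' k j * A i k l) = 0))"

definition sos_formula_exists :: "'a::field itself \<Rightarrow> nat \<Rightarrow> nat \<Rightarrow> nat \<Rightarrow> bool" where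
  "sos_formula_exists K r s n \<longleftrightarrow> (\<exists>A :: nat \<Rightarrow> nat \<Rightarrow> nat \<Rightarrow> 'a. hurwitz_system r s n A)"

definition amicable ::
  "nat \<Rightarrow> nat \<Rightarrow> nat \<Rightarrow> nat \<Rightarrow> (nat \<Rightarrow> nat \<Rightarrow> nat \<Rightarrow> 'a::field) \<Rightarrow> (nat \<Rightarrow> nat \<Rightarrow> nat \<Rightarrow> 'a) \<Rightarrow> bool" where
  "amicable p q s n A B \<longleftrightarrow>
     hurwitz_system p s n A \<and> hurwitz_system q s n B \<and>
     (\<forall>i<p. \<forall>k<q. \<forall>j<s. \<forall>l<s.
        (\<Sum>t<n. A i t j * B k t l) = (\<Sum>t<n. B k t j * A i t l))"

end

theory Submission
  imports Defs
begin

(* The new formula is built from Kronecker products: if C_0, ..., C_r is an [r+1,s,n]-system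
   and A_1, ..., A_p, B an amicable pair of systems with parameters q, m, then
   C_1 (x) B, ..., C_r (x) B, C_0 (x) A_1, ..., C_0 (x) A_p is an [r+p, sq, nm]-system.
   This rests on (X (x) Y)^T (X' (x) Y') = X^T X' (x) Y^T Y'; for the mixed pairs the
   amicability B^T A_j = A_j^T B lets the anticommutation of C_i and C_0 factor out. *)

definition gram :: "nat \<Rightarrow> (nat \<Rightarrow> nat \<Rightarrow> 'a::field) \<Rightarrow> (nat \<Rightarrow> nat \<Rightarrow> 'a) \<Rightarrow> nat \<Rightarrow> nat \<Rightarrow> 'a" where
  "gram n X Y j l = (\<Sum>k<n. X k j * Y k l)"

definition orthonormal_cols :: "nat \<Rightarrow> nat \<Rightarrow> (nat \<Rightarrow> nat \<Rightarrow> 'a::field) \<Rightarrow> bool" where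
  "orthonormal_cols s n X \<longleftrightarrow> (\<forall>j<s. \<forall>l<s. gram n X X j l = (if j = l then 1 else 0))"

definition anticommuting :: "nat \<Rightarrow> nat \<Rightarrow> (nat \<Rightarrow> nat \<Rightarrow> 'a::field) \<Rightarrow> (nat \<Rightarrow> nat \<Rightarrow> 'a) \<Rightarrow> bool" where
  "anticommuting s n X Y \<longleftrightarrow> (\<forall>j<s. \<forall>l<s. gram n X Y j l + gram n Y X j l = 0)"

lemma anticommuting_sym: "anticommuting s n X Y \<Longrightarrow> anticommuting s n Y X"
  by (simp add: anticommuting_def add.commute)

lemma hurwitz_system_iff:
  "hurwitz_system r s n A \<longleftrightarrow>
     (\<forall>i<r. orthonormal_cols s n (A i)) \<and>
     (\<forall>i<r. \<forall>i'<r. i \<noteq> i' \<longrightarrow> anticommuting s n (A i) (A i'))"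
  by (simp add: hurwitz_system_def orthonormal_cols_def anticommuting_def gram_def)

lemma amicable_iff:
  "amicable p q s n A B \<longleftrightarrow>
     hurwitz_system p s n A \<and> hurwitz_system q s n B \<and>
     (\<forall>i<p. \<forall>k<q. \<forall>j<s. \<forall>l<s. gram n (A i) (B k) j l = gram n (B k) (A i) j l)"
  by (simp add: amicable_def gram_def)

text \<open>Row x < n m and column c < s q of X \<otimes> Y are read as the pairs
(x div m, x mod m) and (c div q, c mod q).\<close>

definition kron :: "nat \<Rightarrow> nat \<Rightarrow> (nat \<Rightarrow> nat \<Rightarrow> 'a::field) \<Rightarrow> (nat \<Rightarrow> nat \<Rightarrow> 'a) \<Rightarrow> nat \<Rightarrow> nat \<Rightarrow> 'a" where
  "kron m q X Y x c = X (x div m) (c div q) * Y (x mod m) (c mod q)"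

lemma sum_lessThan_mult_div_mod:
  fixes F :: "nat \<Rightarrow> nat \<Rightarrow> 'b::comm_monoid_add"
  shows "(\<Sum>x<n * m. F (x div m) (x mod m)) = (\<Sum>k<n. \<Sum>t<m. F k t)"
proof -
  have "(\<Sum>x\<in>{k * m..<k * m + m}. F (x div m) (x mod m)) = (\<Sum>t<m. F k t)" for k
    using sum.shift_bounds_nat_ivl[of "\<lambda>x. F (x div m) (x mod m)" 0 "k * m" m]
    by (simp add: lessThan_atLeast0 add.commute)
  then show ?thesis
    by (simp flip: sum.nat_group)
qed

lemma gram_kron:
  "gram (n * m) (kron m q X Y) (kron m q X' Y') c c' =
     gram n X X' (c div q) (c' div q) * gram m Y Y' (c mod q) (c' mod q)"
  unfolding gram_def kron_def sum_product
  using sum_lessThan_mult_div_mod[where n = n and m = m and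
      F = "\<lambda>k t. X k (c div q) * X' k (c' div q) * (Y t (c mod q) * Y' t (c' mod q))"]
  by (simp add: algebra_simps)

lemma div_mod_less_mult:
  assumes "(c::nat) < s * q"
  shows "c div q < s" "c mod q < q"
proof -
  from assms have "q > 0" by (cases q) auto
  with assms show "c div q < s" "c mod q < q"
    by (simp_all add: less_mult_imp_div_less)
qed

lemma orthonormal_cols_kron:
  assumes "orthonormal_cols s n X" and "orthonormal_cols q m Y"
  shows "orthonormal_cols (s * q) (n * m) (kron m q X Y)"
  unfolding orthonormal_cols_def
proof (intro allI impI)
  fix c c' assume "c < s * q" "c' < s * q"
  moreover have "c = c' \<longleftrightarrow> c div q = c' div q \<and> c mod q = c' mod q"
    by (metis div_mult_mod_eq)
  ultimately show "gram (n * m) (kron m q X Y) (kron m q X Y) c c' = (if c = c' then 1 else 0)"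
    using assms div_mod_less_mult by (simp add: gram_kron orthonormal_cols_def)
qed

lemma anticommuting_kron_left:
  assumes "anticommuting s n X X'" and "orthonormal_cols q m Y"
  shows "anticommuting (s * q) (n * m) (kron m q X Y) (kron m q X' Y)"
  unfolding anticommuting_def
proof (intro allI impI)
  fix c c' assume "c < s * q" "c' < s * q"
  then show "gram (n * m) (kron m q X Y) (kron m q X' Y) c c' +
      gram (n * m) (kron m q X' Y) (kron m q X Y) c c' = 0"
    using assms div_mod_less_mult
    by (simp add: gram_kron anticommuting_def orthonormal_cols_def flip: distrib_right)
qed

lemma anticommuting_kron_right:
  assumes "orthonormal_cols s n X" and "anticommuting q m Y Y'"
  shows "anticommuting (s * q) (n * m) (kron m q X Y) (kron m q X Y')"
  unfolding anticommuting_def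
proof (intro allI impI)
  fix c c' assume "c < s * q" "c' < s * q"
  then show "gram (n * m) (kron m q X Y) (kron m q X Y') c c' +
      gram (n * m) (kron m q X Y') (kron m q X Y) c c' = 0"
    using assms div_mod_less_mult
    by (simp add: gram_kron anticommuting_def orthonormal_cols_def flip: distrib_left)
qed

lemma anticommuting_kron_amicable:
  assumes "anticommuting s n X X'"
    and "\<forall>j<q. \<forall>l<q. gram m Y Y' j l = gram m Y' Y j l"
  shows "anticommuting (s * q) (n * m) (kron m q X Y) (kron m q X' Y')"
  unfolding anticommuting_def
proof (intro allI impI)
  fix c c' assume "c < s * q" "c' < s * q"
  then show "gram (n * m) (kron m q X Y) (kron m q X' Y') c c' +
      gram (n * m) (kron m q X' Y') (kron m q X Y) c c' = 0"
    using assms div_mod_less_mult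
    by (simp add: gram_kron anticommuting_def flip: distrib_right)
qed

lemma hurwitz_system_kron:
  fixes C A B :: "nat \<Rightarrow> nat \<Rightarrow> nat \<Rightarrow> 'a::field"
  assumes C: "hurwitz_system (r + 1) s n C" and AB: "amicable p 1 q m A B"
  defines "E \<equiv> \<lambda>i. if i < r then kron m q (C (i + 1)) (B 0) else kron m q (C 0) (A (i - r))"
  shows "hurwitz_system (r + p) (s * q) (n * m) E"
  unfolding hurwitz_system_iff
proof (intro conjI allI impI)
  have C_on: "orthonormal_cols s n (C i)" if "i < r + 1" for i
    using C that by (simp add: hurwitz_system_iff)
  have C_anti: "anticommuting s n (C i) (C i')" if "i < r + 1" "i' < r + 1" "i \<noteq> i'" for i i'
    using C that by (simp add: hurwitz_system_iff)
  have A_on: "orthonormal_cols q m (A j)" if "j < p" for j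
    using AB that by (simp add: amicable_iff hurwitz_system_iff)
  have A_anti: "anticommuting q m (A j) (A j')" if "j < p" "j' < p" "j \<noteq> j'" for j j'
    using AB that by (simp add: amicable_iff hurwitz_system_iff)
  have B_on: "orthonormal_cols q m (B 0)"
    using AB by (simp add: amicable_iff hurwitz_system_iff)
  have AB_comm: "\<forall>j<q. \<forall>l<q. gram m (B 0) (A i) j l = gram m (A i) (B 0) j l" if "i < p" for i
    using AB that by (simp add: amicable_iff)
  have mixed: "anticommuting (s * q) (n * m) (E i) (E i')" if "i < r" "r \<le> i'" "i' < r + p" for i i'
    using that by (simp add: E_def anticommuting_kron_amicable C_anti AB_comm)
  fix i assume i: "i < r + p"
  then show "orthonormal_cols (s * q) (n * m) (E i)"
    by (simp add: E_def orthonormal_cols_kron C_on A_on B_on)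
  fix i' assume i': "i' < r + p" and "i \<noteq> i'"
  then consider "i < r" "i' < r" | "r \<le> i" "r \<le> i'" | "i < r" "r \<le> i'" | "r \<le> i" "i' < r"
    by linarith
  then show "anticommuting (s * q) (n * m) (E i) (E i')"
  proof cases
    case 1
    with \<open>i \<noteq> i'\<close> show ?thesis by (simp add: E_def anticommuting_kron_left C_anti B_on)
  next
    case 2
    with \<open>i \<noteq> i'\<close> i i' show ?thesis by (simp add: E_def anticommuting_kron_right C_on A_anti)
  next
    case 3
    with i' show ?thesis by (intro mixed)
  next
    case 4
    with i show ?thesis by (blast intro: anticommuting_sym mixed)
  qed
qed

theorem mainTheorem2:
  fixes r p s n q m :: nat
  assumes "s > 0" and "n > 0" and "q > 0" and "m > 0"
    and "\<exists>(A :: nat \<Rightarrow> nat \<Rightarrow> nat \<Rightarrow> 'a::field) B. amicable p 1 q m A B"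
    and "sos_formula_exists TYPE('a) (r + 1) s n"
  shows "sos_formula_exists TYPE('a) (r + p) (s * q) (n * m)"
proof -
  obtain A B :: "nat \<Rightarrow> nat \<Rightarrow> nat \<Rightarrow> 'a" where "amicable p 1 q m A B"
    using assms(5) by blast
  moreover obtain C :: "nat \<Rightarrow> nat \<Rightarrow> nat \<Rightarrow> 'a" where "hurwitz_system (r + 1) s n C"
    using assms(6) unfolding sos_formula_exists_def by blast
  ultimately show ?thesis
    unfolding sos_formula_exists_def by (blast intro: hurwitz_system_kron)
qed

end
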